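(* Let $\mathbb{F}$ be an algebraically closed field of characteristic $2$. Let $(V,[\cdot,\cdot]_{V},\alpha_{V},B_{V})$ be an involutive quadratic Hom-Lie algebra over $\mathbb{F}$, let $\mathscr{D}\in\mathrm{Der}_{\alpha_{V}}(V)$ be such that $B_{V}$ is $\mathscr{D}$-invariant, and let $L=\mathbb{F}e^{*}\oplus V\oplus\mathbb{F}e$ (a vector space with two new basis vectors $e^*,e$). (1) Suppose there exist $x_{0}\in V$ and $\lambda\in\mathbb{F}$ such that $\lambda\mathscr{D}+\mathrm{ad}_{V}(x_{0})=\mathscr{D}$, $\alpha_{V}(\mathscr{D}(x_{0}))=\mathscr{D}(x_{0})$, and $\alpha_{V}\circ\mathscr{D}^{2}+\mathscr{D}^{2}\circ\alpha_{V}=\mathrm{ad}_{V}(\mathscr{D}(x_{0}))$, where $\mathrm{ad}_V(x)=[x,\cdot]_V$. Let $\lambda_0\in\mathbb{F}$ and $\beta\in\mathbb{F}$ be arbitrary. Define the bilinear alternating bracket on $L$ by $[x,y]=[x,y]_{V}+B_{V}(\mathscr{D}(x),y)e$, $[e^{*},x]=[x,e^*]=\mathscr{D}(x)$ for $x,y\in V$, $[e^*,e^*]=0$, and $[e,z]=[z,e]=0$ for all $z\in L$; define the linear map $\alpha:L\to L$ by $\alpha(x)=\alpha_{V}(x)+B_{V}(x_{0},x)e$ for $x\in V$, $\alpha(e^{*})=\lambda e^{*}+x_{0}+\lambda_{0}e$, $\alpha(e)=\lambda e$; and define the symmetric bilinear form $B$ on $L$ by $B(x,y)=B_{V}(x,y)$,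 $B(x,e^{*})=B(x,e)=0$ for $x,y\in V$, $B(e^{*},e)=1$, $B(e,e)=0$, $B(e^*,e^* )=\beta$. Then $(L,[\cdot,\cdot],\alpha,B)$ is a multiplicative quadratic Hom-Lie algebra. (2) The map $\alpha$ is invertible if and only if $\lambda\neq0$. Moreover, $\alpha$ is an involution if and only if $\lambda^{2}=1$, $\alpha_{V}(x_{0})=\lambda x_{0}$ and $B_{V}(x_{0},x_{0})=0$.
   Context: A Hom-Lie algebra $(\mathfrak g,[\cdot,\cdot],\alpha)$ over $\mathbb{F}$ (characteristic 2) is a vector space $\mathfrak g$ with a linear map $\alpha$ and a bilinear bracket satisfying $[x,x]=0$, the Hom-Jacobi identity $[\alpha(x),[y,z]]+[\alpha(y),[z,x]]+[\alpha(z),[x,y]]=0$, and $\alpha([x,y])=[\alpha(x),\alpha(y)]$ (multiplicativity) for all $x,y,z$. It is involutive if $\alpha^2=\mathrm{id}$. A quadratic Hom-Lie algebra $(\mathfrak g,[\cdot,\cdot],\alpha,B)$ is a Hom-Lie algebra with a symmetric nondegenerate bilinear form $B$ satisfying $B([x,y],z)=B(x,[y,z])$ and $B(\alpha(x),y)=B(x,\alpha(y))$ for all $x,y,z$. An $\alpha_V$-derivation of $(V,[\cdot,\cdot]_V,\alpha_V)$ is a linear map $\mathscr{D}:V\to V$ with $\mathscr{D}\circ\alpha_V=\alpha_V\circ\mathscr{D}$ and $\mathscr{D}([x,y]_V)=[\mathscr{D}(x),\alpha_V(y)]_V+[\alpha_V(x),\mathscr{D}(y)]_V$; $\mathrm{Der}_{\alpha_V}(V)$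 is the set of these. In characteristic 2, $B_V$ is called $\mathscr{D}$-invariant if $B_V(x,\mathscr{D}(x))=0$ for all $x\in V$. *)

theory Defs
  imports Main "HOL-Library.Product_Plus" "HOL-Computational_Algebra.Polynomial"
begin

definition alg_closed :: "'a::field itself \<Rightarrow> bool" where
  "alg_closed _ \<longleftrightarrow> (\<forall>p::'a poly. degree p > 0 \<longrightarrow> (\<exists>x. poly p x = 0))"

definition char2 :: "'a::field itself \<Rightarrow> bool" where
  "char2 _ \<longleftrightarrow> (1::'a) + 1 = 0"

definition bilinear_map ::
  "('a::field \<Rightarrow> 'v::ab_group_add \<Rightarrow> 'v) \<Rightarrow> ('v \<Rightarrow> 'v \<Rightarrow> 'v) \<Rightarrow> bool" where
  "bilinear_map s br \<longleftrightarrow> (\<forall>x. Vector_Spaces.linear s s (br x)) \<and>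
                          (\<forall>y. Vector_Spaces.linear s s (\<lambda>x. br x y))"

definition bilinear_form ::
  "('a::field \<Rightarrow> 'v::ab_group_add \<Rightarrow> 'v) \<Rightarrow> ('v \<Rightarrow> 'v \<Rightarrow> 'a) \<Rightarrow> bool" where
  "bilinear_form s B \<longleftrightarrow> (\<forall>x. Vector_Spaces.linear s (*) (B x)) \<and>
                         (\<forall>y. Vector_Spaces.linear s (*) (\<lambda>x. B x y))"

text \<open>Hom-Lie algebra (the context's definition includes multiplicativity).\<close>
definition hom_lie ::
  "('a::field \<Rightarrow> 'v::ab_group_add \<Rightarrow> 'v) \<Rightarrow> ('v \<Rightarrow> 'v \<Rightarrow> 'v) \<Rightarrow> ('v \<Rightarrow> 'v) \<Rightarrow> bool" where
  "hom_lie s br al \<longleftrightarrow>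
     vector_space s \<and> bilinear_map s br \<and> Vector_Spaces.linear s s al \<and>
     (\<forall>x. br x x = 0) \<and>
     (\<forall>x y z. br (al x) (br y z) + br (al y) (br z x) + br (al z) (br x y) = 0) \<and>
     (\<forall>x y. al (br x y) = br (al x) (al y))"

definition quadratic_hom_lie ::
  "('a::field \<Rightarrow> 'v::ab_group_add \<Rightarrow> 'v) \<Rightarrow> ('v \<Rightarrow> 'v \<Rightarrow> 'v) \<Rightarrow> ('v \<Rightarrow> 'v) \<Rightarrow> ('v \<Rightarrow> 'v \<Rightarrow> 'a) \<Rightarrow> bool" where
  "quadratic_hom_lie s br al B \<longleftrightarrow>
     hom_lie s br al \<and> bilinear_form s B \<and>
     (\<forall>x y. B x y = B y x) \<and>
     (\<forall>x. (\<forall>y. B x y = 0) \<longrightarrow> x = 0) \<and>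
     (\<forall>x y z. B (br x y) z = B x (br y z)) \<and>
     (\<forall>x y. B (al x) y = B x (al y))"

definition involutive :: "('v \<Rightarrow> 'v) \<Rightarrow> bool" where
  "involutive al \<longleftrightarrow> al \<circ> al = id"

definition hom_derivation ::
  "('a::field \<Rightarrow> 'v::ab_group_add \<Rightarrow> 'v) \<Rightarrow> ('v \<Rightarrow> 'v \<Rightarrow> 'v) \<Rightarrow> ('v \<Rightarrow> 'v) \<Rightarrow> ('v \<Rightarrow> 'v) \<Rightarrow> bool" where
  "hom_derivation s br al D \<longleftrightarrow>
     Vector_Spaces.linear s s D \<and> D \<circ> al = al \<circ> D \<and>
     (\<forall>x y. D (br x y) = br (D x) (al y) + br (al x) (D y))"

definition D_invariant :: "('v \<Rightarrow> 'v \<Rightarrow> 'a::zero) \<Rightarrow> ('v \<Rightarrow> 'v) \<Rightarrow> bool" where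
  "D_invariant B D \<longleftrightarrow> (\<forall>x. B x (D x) = 0)"

definition ad :: "('v \<Rightarrow> 'v \<Rightarrow> 'v) \<Rightarrow> 'v \<Rightarrow> 'v \<Rightarrow> 'v" where
  "ad br x = br x"

text \<open>The extension $L = \mathbb{F}e^* \oplus V \oplus \mathbb{F}e$, represented as triples
  (a, x, b) meaning a e* + x + b e.\<close>

definition scaleL :: "('a::field \<Rightarrow> 'v \<Rightarrow> 'v) \<Rightarrow> 'a \<Rightarrow> 'a \<times> 'v \<times> 'a \<Rightarrow> 'a \<times> 'v \<times> 'a" where
  "scaleL s c = (\<lambda>(a, x, b). (c * a, s c x, c * b))"

definition bracketL ::
  "('a::field \<Rightarrow> 'v::ab_group_add \<Rightarrow> 'v) \<Rightarrow> ('v \<Rightarrow> 'v \<Rightarrow> 'v) \<Rightarrow> ('v \<Rightarrow> 'v \<Rightarrow> 'a) \<Rightarrow> ('v \<Rightarrow> 'v)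
   \<Rightarrow> 'a \<times> 'v \<times> 'a \<Rightarrow> 'a \<times> 'v \<times> 'a \<Rightarrow> 'a \<times> 'v \<times> 'a" where
  "bracketL s br B D = (\<lambda>(a, x, b) (c, y, d).
      (0, br x y + s a (D y) + s c (D x), B (D x) y))"

definition alphaL ::
  "('a::field \<Rightarrow> 'v::ab_group_add \<Rightarrow> 'v) \<Rightarrow> ('v \<Rightarrow> 'v) \<Rightarrow> ('v \<Rightarrow> 'v \<Rightarrow> 'a) \<Rightarrow> 'v \<Rightarrow> 'a \<Rightarrow> 'a
   \<Rightarrow> 'a \<times> 'v \<times> 'a \<Rightarrow> 'a \<times> 'v \<times> 'a" where
  "alphaL s al B x0 lam lam0 = (\<lambda>(a, x, b).
      (a * lam, al x + s a x0, B x0 x + a * lam0 + b * lam))"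

definition formL ::
  "('v \<Rightarrow> 'v \<Rightarrow> 'a::field) \<Rightarrow> 'a \<Rightarrow> 'a \<times> 'v \<times> 'a \<Rightarrow> 'a \<times> 'v \<times> 'a \<Rightarrow> 'a" where
  "formL B beta = (\<lambda>(a, x, b) (c, y, d). B x y + a * d + b * c + beta * a * c)"

end

theory Submission
  imports Defs
begin

text \<open>In characteristic 2 the bracket of \<open>V\<close> is symmetric and \<open>D\<close>-invariance of \<open>B\<^sub>V\<close>
  makes \<open>D\<close> self-adjoint. The first hypothesis says \<open>ad x\<^sub>0 = (1 + \<lambda>) D\<close>, so in the
  Hom-Jacobi identity and in multiplicativity the \<open>x\<^sub>0\<close>-part of
  \<open>\<alpha>(e\<^sup>*) = \<lambda> e\<^sup>* + x\<^sub>0 + \<lambda>\<^sub>0 e\<close> combines with \<open>\<lambda>\<close> times its \<open>e\<^sup>*\<close>-part into a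
  single \<open>D\<close>. What remains of the \<open>V\<close>-component is the Hom-Jacobi identity of \<open>V\<close> plus the
  derivation rule; what remains of the \<open>e\<close>-component follows from invariance of \<open>B\<^sub>V\<close> once
  \<open>[D x\<^sub>0, V] = 0\<close>, which is what the third hypothesis amounts to. Invertibility and
  involutivity of \<open>\<alpha>\<close> are read off from its triangular shape with diagonal
  \<open>(\<lambda>, \<alpha>\<^sub>V, \<lambda>)\<close>.\<close>

lemma char2_scalar_simps:
  assumes "char2 TYPE('a::field)"
  shows "(a::'a) + a = 0" and "a + (a + b) = b" and "- a = a"
proof -
  have "a + a = a * (1 + 1)" by (simp add: algebra_simps)
  with assms show aa: "a + a = 0" unfolding char2_def by simp
  then show "a + (a + b) = b" by (simp add: add.assoc[symmetric])
  from aa show "- a = a" by (simp add: add_eq_0_iff)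
qed

lemma (in vector_space) char2_vector_simps:
  assumes "char2 TYPE('a)"
  shows "(x::'b) + x = 0" and "x + (x + y) = y" and "- x = x"
proof -
  have "x + x = (1 + 1) *s x" by (simp only: scale_left_distrib scale_one)
  with assms show xx: "x + x = 0" unfolding char2_def by simp
  then show "x + (x + y) = y" by (simp add: add.assoc[symmetric])
  from xx show "- x = x" by (simp add: add_eq_0_iff)
qed

lemma vector_space_field_mult: "vector_space ((*) :: 'a::field \<Rightarrow> 'a \<Rightarrow> 'a)"
  by unfold_locales (simp_all add: algebra_simps)

lemma vector_space_scaleL:
  assumes "vector_space s"
  shows "vector_space (scaleL s)"
proof -
  interpret vector_space s by fact
  show ?thesis by unfold_locales (auto simp: scaleL_def algebra_simps)
qed

locale char2_involutive_quadratic_hom_lie =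
  fixes s :: "'a::field \<Rightarrow> 'v::ab_group_add \<Rightarrow> 'v"
    and br :: "'v \<Rightarrow> 'v \<Rightarrow> 'v" and al :: "'v \<Rightarrow> 'v" and BV :: "'v \<Rightarrow> 'v \<Rightarrow> 'a"
  assumes char2: "char2 TYPE('a)"
    and quadratic: "quadratic_hom_lie s br al BV"
    and involutive: "involutive al"
begin

sublocale vector_space s
  using quadratic unfolding quadratic_hom_lie_def hom_lie_def by simp

sublocale al: Vector_Spaces.linear s s al
  using quadratic unfolding quadratic_hom_lie_def hom_lie_def by simp

lemma bracket_add_left: "br (x + y) z = br x z + br y z"
  and bracket_add_right: "br x (y + z) = br x y + br x z"
  and bracket_scale_left: "br (s c x) y = s c (br x y)"
  and bracket_scale_right: "br x (s c y) = s c (br x y)"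
  using quadratic
  unfolding quadratic_hom_lie_def hom_lie_def bilinear_map_def Vector_Spaces.linear_iff
  by auto

lemma form_add_left: "BV (x + y) z = BV x z + BV y z"
  and form_add_right: "BV x (y + z) = BV x y + BV x z"
  and form_scale_left: "BV (s c x) y = c * BV x y"
  and form_scale_right: "BV x (s c y) = c * BV x y"
  using quadratic
  unfolding quadratic_hom_lie_def bilinear_form_def Vector_Spaces.linear_iff
  by auto

lemma bracket_zero_left [simp]: "br 0 y = 0"
  and bracket_zero_right [simp]: "br y 0 = 0"
  and form_zero_left [simp]: "BV 0 y = 0"
  and form_zero_right [simp]: "BV y 0 = 0"
  using bracket_scale_left[of 0 0 y] bracket_scale_right[of y 0 0]
    form_scale_left[of 0 0 y] form_scale_right[of y 0 0]
  by simp_all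

lemma bracket_self: "br x x = 0"
  and hom_jacobi: "br (al x) (br y z) + br (al y) (br z x) + br (al z) (br x y) = 0"
  and alpha_bracket: "al (br x y) = br (al x) (al y)"
  and form_commute: "BV x y = BV y x"
  and form_bracket: "BV (br x y) z = BV x (br y z)"
  and form_alpha: "BV (al x) y = BV x (al y)"
  using quadratic unfolding quadratic_hom_lie_def hom_lie_def by auto

lemma form_nondegenerate: "(\<And>y. BV x y = 0) \<Longrightarrow> x = 0"
  using quadratic unfolding quadratic_hom_lie_def by auto

lemma alpha_alpha: "al (al x) = x"
  using involutive unfolding involutive_def by (metis comp_apply id_apply)

lemmas linear_simps = bracket_add_left bracket_add_right bracket_scale_left bracket_scale_right
  form_add_left form_add_right form_scale_left form_scale_right al.add al.scale
  scale_left_distrib scale_right_distrib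

lemmas char2_simps = char2_scalar_simps[OF char2] char2_vector_simps[OF char2]

lemma bracket_commute: "br x y = br y x"
proof -
  have "br (x + y) (x + y) = br x x + br x y + (br y x + br y y)"
    by (simp only: bracket_add_left bracket_add_right add_ac)
  then have "br x y + br y x = 0"
    by (simp add: bracket_self)
  then show ?thesis
    by (metis add_eq_0_iff char2_simps)
qed

lemma form_bracket_cyclic: "BV p (br q r) = BV r (br p q)"
  by (metis form_bracket form_commute)

lemma linear_alphaL: "Vector_Spaces.linear (scaleL s) (scaleL s) (alphaL s al BV x0 lam lam0)"
  by (auto simp: Vector_Spaces.linear_iff vector_space_scaleL vector_space_axioms alphaL_def
      scaleL_def split_beta linear_simps algebra_simps)

lemma bilinear_formL: "bilinear_form (scaleL s) (formL BV beta)"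
  by (auto simp: bilinear_form_def Vector_Spaces.linear_iff vector_space_scaleL vector_space_axioms
      vector_space_field_mult formL_def scaleL_def split_beta linear_simps algebra_simps)

lemma formL_commute: "formL BV beta X Y = formL BV beta Y X"
  by (cases X; cases Y) (simp add: formL_def form_commute algebra_simps)

lemma formL_alphaL:
  "formL BV beta (alphaL s al BV x0 lam lam0 X) Y = formL BV beta X (alphaL s al BV x0 lam lam0 Y)"
  by (cases X; cases Y)
    (simp add: formL_def alphaL_def linear_simps form_alpha form_commute[of _ x0] algebra_simps)

lemma formL_nondegenerate:
  assumes "\<And>Y. formL BV beta X Y = 0"
  shows "X = 0"
proof -
  obtain a x b where X: "X = (a, x, b)" by (cases X) auto
  have "a = 0" using assms[of "(0, 0, 1)"] by (simp add: X formL_def)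
  moreover have "b = 0" using assms[of "(1, 0, 0)"] \<open>a = 0\<close> by (simp add: X formL_def)
  moreover have "x = 0"
    by (rule form_nondegenerate) (use assms[of "(0, _, 0)"] in \<open>simp add: X formL_def\<close>)
  ultimately show ?thesis by (simp add: X zero_prod_def)
qed

lemma bij_alphaL_iff: "bij (alphaL s al BV x0 lam lam0) \<longleftrightarrow> lam \<noteq> 0"
proof
  assume "bij (alphaL s al BV x0 lam lam0)"
  then obtain X where "alphaL s al BV x0 lam lam0 X = (1, 0, 0)"
    by (metis bij_is_surj surjD)
  then show "lam \<noteq> 0" by (cases X) (auto simp: alphaL_def)
next
  assume lam: "lam \<noteq> 0"
  show "bij (alphaL s al BV x0 lam lam0)"
  proof (rule bijI)
    show "inj (alphaL s al BV x0 lam lam0)"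
    proof (rule injI)
      fix X Y assume eq: "alphaL s al BV x0 lam lam0 X = alphaL s al BV x0 lam lam0 Y"
      obtain a x b where X: "X = (a, x, b)" by (cases X) auto
      obtain c y d where Y: "Y = (c, y, d)" by (cases Y) auto
      have "a = c" using eq lam by (simp add: X Y alphaL_def)
      moreover have "x = y" using eq \<open>a = c\<close> by (simp add: X Y alphaL_def) (metis alpha_alpha)
      moreover have "b = d" using eq lam \<open>a = c\<close> \<open>x = y\<close> by (simp add: X Y alphaL_def)
      ultimately show "X = Y" by (simp add: X Y)
    qed
    show "surj (alphaL s al BV x0 lam lam0)"
      unfolding surj_def
    proof
      fix P :: "'a \<times> 'v \<times> 'a"
      obtain p q r where P: "P = (p, q, r)" by (cases P) auto
      define a where "a = p / lam"
      define x where "x = al (q - s a x0)"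
      define b where "b = (r - BV x0 x - a * lam0) / lam"
      have "al x + s a x0 = q" by (simp add: x_def alpha_alpha)
      with lam have "P = alphaL s al BV x0 lam lam0 (a, x, b)"
        by (simp add: P alphaL_def a_def b_def)
      then show "\<exists>X. P = alphaL s al BV x0 lam lam0 X" ..
    qed
  qed
qed

lemma involutive_alphaL_iff:
  "involutive (alphaL s al BV x0 lam lam0) \<longleftrightarrow> lam ^ 2 = 1 \<and> al x0 = s lam x0 \<and> BV x0 x0 = 0"
proof
  assume "involutive (alphaL s al BV x0 lam lam0)"
  then have "alphaL s al BV x0 lam lam0 (alphaL s al BV x0 lam lam0 (1, 0, 0)) = (1, 0, 0)"
    unfolding involutive_def by (metis comp_apply id_apply)
  then have "lam * lam = 1" "al x0 + s lam x0 = 0" "BV x0 x0 + lam * lam0 + lam0 * lam = 0"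
    by (simp_all add: alphaL_def linear_simps)
  then show "lam ^ 2 = 1 \<and> al x0 = s lam x0 \<and> BV x0 x0 = 0"
    by (simp add: power2_eq_square add_eq_0_iff char2_simps mult.commute add.assoc)
next
  assume "lam ^ 2 = 1 \<and> al x0 = s lam x0 \<and> BV x0 x0 = 0"
  then have lam: "lam * lam = 1" and x0: "al x0 = s lam x0" "BV x0 x0 = 0"
    by (simp_all add: power2_eq_square)
  have lam_lam: "lam * (lam * u) = u" for u
    by (simp add: lam mult.assoc[symmetric])
  have "BV x0 (al x) = lam * BV x0 x" for x
    by (metis form_alpha form_scale_left x0(1))
  then show "involutive (alphaL s al BV x0 lam lam0)"
    unfolding involutive_def
    by (auto simp: alphaL_def linear_simps alpha_alpha x0 lam lam_lam add_ac mult_ac char2_simps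
        distrib_left)
qed

end

locale double_extension = char2_involutive_quadratic_hom_lie s br al BV
  for s :: "'a::field \<Rightarrow> 'v::ab_group_add \<Rightarrow> 'v" and br al BV +
  fixes D :: "'v \<Rightarrow> 'v" and x0 :: 'v and lam lam0 :: 'a
  assumes derivation: "hom_derivation s br al D"
    and D_invariant: "D_invariant BV D"
    and ad_x0: "\<forall>y. s lam (D y) + ad br x0 y = D y"
    and alpha_D_x0: "al (D x0) = D x0"
    and alpha_D_square: "\<forall>y. al (D (D y)) + D (D (al y)) = ad br (D x0) y"
begin

abbreviation "brL \<equiv> bracketL s br BV D"
abbreviation "alL \<equiv> alphaL s al BV x0 lam lam0"

sublocale D: Vector_Spaces.linear s s D
  using derivation unfolding hom_derivation_def by simp

lemma D_alpha: "D (al x) = al (D x)"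
  using derivation unfolding hom_derivation_def by (metis comp_apply)

lemma D_bracket: "D (br x y) = br (D x) (al y) + br (al x) (D y)"
  using derivation unfolding hom_derivation_def by simp

lemma form_D_self: "BV x (D x) = 0"
  using D_invariant unfolding D_invariant_def by simp

lemma form_D: "BV (D x) y = BV x (D y)"
proof -
  have "BV (x + y) (D (x + y)) = 0" by (rule form_D_self)
  then have "BV x (D y) + BV y (D x) = 0"
    by (simp add: D.add form_add_left form_add_right form_D_self add.commute)
  then show ?thesis by (metis add_eq_0_iff char2_simps form_commute)
qed

lemma bracket_x0: "br x0 y = D y + s lam (D y)"
  using ad_x0 unfolding ad_def by (metis add.commute char2_simps)

text \<open>Since \<open>D\<close> commutes with \<open>al\<close>, the left-hand side of \<open>alpha_D_square\<close> is \<open>v + v = 0\<close>.\<close>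
lemma bracket_D_x0: "br (D x0) y = 0"
  using alpha_D_square unfolding ad_def by (simp add: D_alpha char2_simps)

lemmas extension_simps = linear_simps D.add D.scale D_alpha D_bracket bracket_x0

lemma bilinear_bracketL: "bilinear_map (scaleL s) brL"
  by (auto simp: bilinear_map_def Vector_Spaces.linear_iff
      vector_space_scaleL[OF vector_space_axioms] bracketL_def scaleL_def split_beta extension_simps algebra_simps)

lemma bracketL_self: "brL X X = 0"
  by (cases X) (simp add: bracketL_def zero_prod_def bracket_self form_D form_D_self char2_simps)

lemma hom_jacobi_V_component:
  "fst (snd (brL (alL X) (brL Y Z) + brL (alL Y) (brL Z X) + brL (alL Z) (brL X Y))) = 0"
proof -
  obtain a x b c y d e z f where "X = (a, x, b)" "Y = (c, y, d)" "Z = (e, z, f)"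
    by (cases X; cases Y; cases Z) auto
  moreover have "br (D p) (al q) = br (al q) (D p)" for p q
    by (rule bracket_commute)
  ultimately have "fst (snd (brL (alL X) (brL Y Z) + brL (alL Y) (brL Z X) + brL (alL Z) (brL X Y)))
      = br (al x) (br y z) + br (al y) (br z x) + br (al z) (br x y)"
    by (simp add: bracketL_def alphaL_def extension_simps add_ac mult_ac char2_simps)
  then show ?thesis by (simp add: hom_jacobi)
qed

lemma form_alpha_D_cyclic:
  "BV (al (D x)) (br y z) + BV (al (D y)) (br z x) + BV (al (D z)) (br x y) = 0"
proof -
  have "BV (al (D x)) (br y z) = BV (al x) (br (D y) (al z)) + BV (al x) (br (al y) (D z))"
    for x y z by (metis D_alpha form_D D_bracket form_add_right)
  moreover have "BV (al x) (br (D y) (al z)) = BV (al z) (br (al x) (D y))" for x y z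
    by (rule form_bracket_cyclic)
  ultimately show ?thesis by (simp add: add_ac char2_simps)
qed

lemma hom_jacobi_e_component:
  "snd (snd (brL (alL X) (brL Y Z) + brL (alL Y) (brL Z X) + brL (alL Z) (brL X Y))) = 0"
proof -
  obtain a x b c y d e z f where "X = (a, x, b)" "Y = (c, y, d)" "Z = (e, z, f)"
    by (cases X; cases Y; cases Z) auto
  moreover have "BV (al (D x)) (D z) = BV (al (D z)) (D x)" for x z
    by (metis form_alpha form_commute)
  moreover have "BV (D x0) (br y z) = 0" for y z
    by (metis form_bracket bracket_D_x0 form_zero_left)
  ultimately have "snd (snd (brL (alL X) (brL Y Z) + brL (alL Y) (brL Z X) + brL (alL Z) (brL X Y)))
      = BV (al (D x)) (br y z) + BV (al (D y)) (br z x) + BV (al (D z)) (br x y)"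
    by (simp add: bracketL_def alphaL_def linear_simps D.add D.scale D_alpha add_ac mult_ac
        char2_simps distrib_left)
  then show ?thesis by (simp add: form_alpha_D_cyclic)
qed

lemma hom_jacobi_bracketL: "brL (alL X) (brL Y Z) + brL (alL Y) (brL Z X) + brL (alL Z) (brL X Y) = 0"
  using hom_jacobi_V_component[of X Y Z] hom_jacobi_e_component[of X Y Z]
  by (simp add: prod_eq_iff bracketL_def split_beta)

lemma alphaL_bracketL: "alL (brL X Y) = brL (alL X) (alL Y)"
proof -
  obtain a x b c y d where X: "X = (a, x, b)" and Y: "Y = (c, y, d)"
    by (cases X; cases Y) auto
  have "al (br x y + s a (D y) + s c (D x)) = br (al x + s a x0) (al y + s c x0)
      + s (a * lam) (D (al y + s c x0)) + s (c * lam) (D (al x + s a x0))"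
    by (simp add: extension_simps alpha_bracket bracket_commute[of _ x0]
        bracket_self add_ac mult_ac char2_simps)
  moreover have "BV x0 (br x y + s a (D y) + s c (D x)) + BV (D x) y * lam
      = BV (D (al x + s a x0)) (al y + s c x0)"
  proof -
    have "BV (al (D x)) (al y) = BV (D x) y" by (metis form_alpha alpha_alpha)
    moreover have "BV x0 (br x y) = BV (D x) y + lam * BV (D x) y"
      by (metis form_bracket bracket_x0 form_add_left form_scale_left)
    moreover have "BV (D x0) (al y) = BV x0 (D y)" by (metis form_alpha alpha_D_x0 form_D)
    moreover have "BV (al (D x)) x0 = BV x0 (D x)" by (metis form_alpha D_alpha alpha_D_x0 form_D form_commute)
    moreover have "BV (D x0) x0 = 0" by (metis form_D_self form_commute)
    ultimately show ?thesis
      by (simp add: linear_simps D.add D.scale D_alpha add_ac mult_ac char2_simps)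
  qed
  ultimately show ?thesis by (simp add: X Y bracketL_def alphaL_def mult.commute)
qed

lemma formL_bracketL: "formL BV beta (brL X Y) Z = formL BV beta X (brL Y Z)"
  by (cases X; cases Y; cases Z)
    (simp add: formL_def bracketL_def linear_simps form_bracket form_D algebra_simps)

lemma quadratic_hom_lie_L: "quadratic_hom_lie (scaleL s) brL alL (formL BV beta)"
  unfolding quadratic_hom_lie_def hom_lie_def
  by (intro conjI allI impI vector_space_scaleL vector_space_axioms bilinear_bracketL linear_alphaL
      bracketL_self hom_jacobi_bracketL alphaL_bracketL bilinear_formL formL_commute
      formL_nondegenerate formL_bracketL formL_alphaL) blast

end

theorem theorem3p1:
  fixes s :: "'a::field \<Rightarrow> 'v::ab_group_add \<Rightarrow> 'v"
    and br :: "'v \<Rightarrow> 'v \<Rightarrow> 'v" and al :: "'v \<Rightarrow> 'v"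
    and BV :: "'v \<Rightarrow> 'v \<Rightarrow> 'a" and D :: "'v \<Rightarrow> 'v"
    and x0 :: 'v and lam lam0 beta :: 'a
  assumes "alg_closed TYPE('a)" and "char2 TYPE('a)"
    and "quadratic_hom_lie s br al BV" and "involutive al"
    and "hom_derivation s br al D" and "D_invariant BV D"
    and "\<forall>y. s lam (D y) + ad br x0 y = D y"
    and "al (D x0) = D x0"
    and "\<forall>y. al (D (D y)) + D (D (al y)) = ad br (D x0) y"
  shows "quadratic_hom_lie (scaleL s) (bracketL s br BV D) (alphaL s al BV x0 lam lam0) (formL BV beta)
    \<and> (bij (alphaL s al BV x0 lam lam0) \<longleftrightarrow> lam \<noteq> 0)
    \<and> (involutive (alphaL s al BV x0 lam lam0) \<longleftrightarrow>
         lam ^ 2 = 1 \<and> al x0 = s lam x0 \<and> BV x0 x0 = 0)"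
proof -
  interpret double_extension s br al BV D x0 lam lam0
    using assms(2-) by unfold_locales simp_all
  show ?thesis
    using quadratic_hom_lie_L bij_alphaL_iff involutive_alphaL_iff by blast
qed

end
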